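(* Let $G$ be a finite, simple, undirected, connected graph. Then $O_{R,k}(G)$, viewed as a function of the positive integer $k$ with values in $\{\mathcal{B}=-1,\ \mathcal{N}=0,\ \mathcal{M}=1\}$, is non-decreasing in $k$.
   Context: For vertices $x,y$ of $G$, $d(x,y)$ is the shortest-path distance and $d_k(x,y)=\min\{d(x,y),k+1\}$ for a positive integer $k$. A set $S\subseteq V(G)$ is a distance-$k$ resolving set if for all distinct $x,y\in V(G)$ there exists $z\in S$ with $d_k(x,z)\neq d_k(y,z)$. The Maker-Breaker distance-$k$ resolving game (MB$k$RG) on $G$ is played by two players, Maker and Breaker, who alternately select a vertex of $G$ not yet chosen (no passing). Maker wins if the vertices he selects (at some point) form a distance-$k$ resolving set of $G$; Breaker wins if she prevents this. The $M$-game is the game in which Maker moves first, the $B$-game the one in which Breaker moves first. $O_{R,k}(G)=\mathcal{M}$ if Maker has a winning strategy in both the $M$-game and the $B$-game; $O_{R,k}(G)=\mathcal{B}$ if Breaker has a winning strategy in both; $O_{R,k}(G)=\mathcal{N}$ if the first player has a winning strategy (in both the $M$-game and the $B$-game). The outcomes are ordered $\mathcal{B}<\mathcal{N}<\mathcal{M}$, identified with $-1,0,1$. *)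

theory Defs
  imports Main
begin

definition simple_graph :: "'a set \<Rightarrow> ('a \<Rightarrow> 'a \<Rightarrow> bool) \<Rightarrow> bool" where
  "simple_graph V E \<longleftrightarrow> finite V \<and> (\<forall>x y. E x y \<longrightarrow> x \<in> V \<and> y \<in> V)
     \<and> (\<forall>x y. E x y \<longrightarrow> E y x) \<and> (\<forall>x. \<not> E x x)"

text \<open>A walk from x to y: a list of vertices, consecutive ones adjacent; length = number of edges.\<close>

definition is_walk :: "'a set \<Rightarrow> ('a \<Rightarrow> 'a \<Rightarrow> bool) \<Rightarrow> 'a list \<Rightarrow> 'a \<Rightarrow> 'a \<Rightarrow> bool" where
  "is_walk V E xs x y \<longleftrightarrow> xs \<noteq> [] \<and> hd xs = x \<and> last xs = y \<and> set xs \<subseteq> V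
     \<and> (\<forall>i. Suc i < length xs \<longrightarrow> E (xs ! i) (xs ! Suc i))"

definition connected_graph :: "'a set \<Rightarrow> ('a \<Rightarrow> 'a \<Rightarrow> bool) \<Rightarrow> bool" where
  "connected_graph V E \<longleftrightarrow> (\<forall>x\<in>V. \<forall>y\<in>V. \<exists>xs. is_walk V E xs x y)"

definition gdist :: "'a set \<Rightarrow> ('a \<Rightarrow> 'a \<Rightarrow> bool) \<Rightarrow> 'a \<Rightarrow> 'a \<Rightarrow> nat" where
  "gdist V E x y = (LEAST n. \<exists>xs. is_walk V E xs x y \<and> length xs = Suc n)"

definition gdist_k :: "'a set \<Rightarrow> ('a \<Rightarrow> 'a \<Rightarrow> bool) \<Rightarrow> nat \<Rightarrow> 'a \<Rightarrow> 'a \<Rightarrow> nat" where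
  "gdist_k V E k x y = min (gdist V E x y) (k + 1)"

definition dist_k_resolving :: "'a set \<Rightarrow> ('a \<Rightarrow> 'a \<Rightarrow> bool) \<Rightarrow> nat \<Rightarrow> 'a set \<Rightarrow> bool" where
  "dist_k_resolving V E k S \<longleftrightarrow> S \<subseteq> V \<and>
     (\<forall>x\<in>V. \<forall>y\<in>V. x \<noteq> y \<longrightarrow> (\<exists>z\<in>S. gdist_k V E k x z \<noteq> gdist_k V E k y z))"

text \<open>A position is (M, B, t): M = Maker's vertices, B = Breaker's vertices,
  t = True iff it is Maker's turn.  maker_wins: Maker has a winning strategy from the
  position (Maker wins as soon as R holds of his set); breaker_wins: Breaker has a
  winning strategy (R never holds of Maker's set up to the end of the game).\<close>

inductive maker_wins :: "'a set \<Rightarrow> ('a set \<Rightarrow> bool) \<Rightarrow> 'a set \<Rightarrow> 'a set \<Rightarrow> bool \<Rightarrow> bool"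
  for V R where
  mw_done: "R M \<Longrightarrow> maker_wins V R M B t"
| mw_maker: "v \<in> V - M - B \<Longrightarrow> maker_wins V R (insert v M) B False \<Longrightarrow> maker_wins V R M B True"
| mw_breaker: "V - M - B \<noteq> {} \<Longrightarrow> (\<forall>v\<in>V - M - B. maker_wins V R M (insert v B) True)
     \<Longrightarrow> maker_wins V R M B False"

inductive breaker_wins :: "'a set \<Rightarrow> ('a set \<Rightarrow> bool) \<Rightarrow> 'a set \<Rightarrow> 'a set \<Rightarrow> bool \<Rightarrow> bool"
  for V R where
  bw_end: "\<not> R M \<Longrightarrow> V - M - B = {} \<Longrightarrow> breaker_wins V R M B t"
| bw_breaker: "\<not> R M \<Longrightarrow> v \<in> V - M - B \<Longrightarrow> breaker_wins V R M (insert v B) True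
     \<Longrightarrow> breaker_wins V R M B False"
| bw_maker: "\<not> R M \<Longrightarrow> V - M - B \<noteq> {} \<Longrightarrow> (\<forall>v\<in>V - M - B. breaker_wins V R (insert v M) B False)
     \<Longrightarrow> breaker_wins V R M B True"

text \<open>M-game: Maker moves first (start position with Maker to move); B-game: Breaker first.\<close>

definition maker_wins_M_game :: "'a set \<Rightarrow> ('a \<Rightarrow> 'a \<Rightarrow> bool) \<Rightarrow> nat \<Rightarrow> bool" where
  "maker_wins_M_game V E k = maker_wins V (dist_k_resolving V E k) {} {} True"

definition maker_wins_B_game :: "'a set \<Rightarrow> ('a \<Rightarrow> 'a \<Rightarrow> bool) \<Rightarrow> nat \<Rightarrow> bool" where
  "maker_wins_B_game V E k = maker_wins V (dist_k_resolving V E k) {} {} False"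

definition breaker_wins_M_game :: "'a set \<Rightarrow> ('a \<Rightarrow> 'a \<Rightarrow> bool) \<Rightarrow> nat \<Rightarrow> bool" where
  "breaker_wins_M_game V E k = breaker_wins V (dist_k_resolving V E k) {} {} True"

definition breaker_wins_B_game :: "'a set \<Rightarrow> ('a \<Rightarrow> 'a \<Rightarrow> bool) \<Rightarrow> nat \<Rightarrow> bool" where
  "breaker_wins_B_game V E k = breaker_wins V (dist_k_resolving V E k) {} {} False"

text \<open>Outcome O_{R,k}(G) encoded as M = 1, N = 0, B = -1.  The final branch is
  unreachable for Maker-Breaker games (standard fact) and is left unspecified.\<close>

definition outcome_Rk :: "'a set \<Rightarrow> ('a \<Rightarrow> 'a \<Rightarrow> bool) \<Rightarrow> nat \<Rightarrow> int" where
  "outcome_Rk V E k =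
    (if maker_wins_M_game V E k \<and> maker_wins_B_game V E k then 1
     else if breaker_wins_M_game V E k \<and> breaker_wins_B_game V E k then -1
     else if maker_wins_M_game V E k \<and> breaker_wins_B_game V E k then 0
     else undefined)"

end

theory Submission
  imports Defs
begin

text \<open>By determinacy of finite games, and because an extra move never hurts Maker when
  the winning sets are closed under supersets, the outcome is 1 if Maker wins the B-game,
  0 if he wins only the M-game, and -1 otherwise. A set that is distance-k1 resolving is
  distance-k2 resolving for every k2 \<ge> k1, since truncating distances at k2 + 1 separates
  every pair that truncation at k1 + 1 separates; so each of Maker's winning strategies for
  k1 also wins for k2.\<close>

definition upward_closed_in :: "'a set \<Rightarrow> ('a set \<Rightarrow> bool) \<Rightarrow> bool" where
  "upward_closed_in V R \<longleftrightarrow> (\<forall>S S'. R S \<longrightarrow> S \<subseteq> S' \<longrightarrow> S' \<subseteq> V \<longrightarrow> R S')"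

lemma upward_closed_inD:
  "upward_closed_in V R \<Longrightarrow> R S \<Longrightarrow> S \<subseteq> S' \<Longrightarrow> S' \<subseteq> V \<Longrightarrow> R S'"
  unfolding upward_closed_in_def by blast

lemma maker_wins_mono_goal:
  assumes "maker_wins V R M B t" and "\<And>S. R S \<Longrightarrow> R' S"
  shows "maker_wins V R' M B t"
  using assms(1)
  by (induction rule: maker_wins.induct) (auto intro: maker_wins.intros assms(2))

lemma maker_wins_not_breaker_wins:
  assumes "maker_wins V R M B t"
  shows "\<not> breaker_wins V R M B t"
  using assms
  by (induction rule: maker_wins.induct) (blast elim: breaker_wins.cases)+

lemma maker_wins_or_breaker_wins:
  assumes "finite V"
  shows "maker_wins V R M B t \<or> breaker_wins V R M B t"
proof (induction "card (V - M - B)" arbitrary: M B t rule: less_induct)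
  case less
  have IH_maker: "maker_wins V R (insert v M) B t' \<or> breaker_wins V R (insert v M) B t'"
    and IH_breaker: "maker_wins V R M (insert v B) t' \<or> breaker_wins V R M (insert v B) t'"
    if "v \<in> V - M - B" for v t'
    using that assms by (auto intro!: less psubset_card_mono)
  show ?case
  proof (cases "R M \<or> V - M - B = {}")
    case True
    then show ?thesis by (auto intro: maker_wins.mw_done breaker_wins.bw_end)
  next
    case running: False
    show ?thesis
    proof (cases t)
      case True
      then show ?thesis
        using running IH_maker by (metis maker_wins.mw_maker breaker_wins.bw_maker)
    next
      case False
      then show ?thesis
        using running IH_breaker
        by (metis maker_wins.mw_breaker breaker_wins.bw_breaker)
    qed
  qed
qed

lemma maker_wins_imp_winning_unblocked:
  assumes "maker_wins V R M B t" and "M \<subseteq> V" and up: "upward_closed_in V R"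
  shows "R (M \<union> (V - B))"
  using assms(1,2)
proof (induction rule: maker_wins.induct)
  case (mw_done M B t)
  then show ?case by (auto intro: upward_closed_inD[OF up])
next
  case (mw_maker v M B)
  then have "insert v M \<union> (V - B) = M \<union> (V - B)" by auto
  with mw_maker show ?case by auto
next
  case (mw_breaker M B)
  then obtain v where "v \<in> V - M - B" by auto
  with mw_breaker have "R (M \<union> (V - insert v B))" by auto
  then show ?case by (rule upward_closed_inD[OF up]) (use mw_breaker.prems in auto)
qed

lemma maker_wins_mono_maker_set:
  assumes "maker_wins V R M B t" and "M \<subseteq> M'" and "M' \<subseteq> V - B"
    and up: "upward_closed_in V R"
  shows "maker_wins V R M' B t"
proof -
  have board_full: "maker_wins V R M' B t"
    if "maker_wins V R M B t" "M \<subseteq> M'" "M' = V - B" for M B t M'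
  proof (rule maker_wins.mw_done)
    have "R (M \<union> (V - B))"
      using that(2,3) by (intro maker_wins_imp_winning_unblocked[OF that(1) _ up]) auto
    with that show "R M'" by (simp add: Un_absorb1)
  qed
  from assms(1-3) show ?thesis
  proof (induction arbitrary: M' rule: maker_wins.induct)
    case (mw_done M B t)
    then have "R M'" by (blast intro: upward_closed_inD[OF up])
    then show ?case by (rule maker_wins.mw_done)
  next
    case (mw_maker v M B)
    show ?case
    proof (cases "V - M' - B = {}")
      case True
      show ?thesis
      proof (rule board_full)
        show "maker_wins V R M B True" using mw_maker.hyps by (rule maker_wins.mw_maker)
      qed (use True mw_maker.prems in auto)
    next
      case False
      \<comment> \<open>If Maker's strategy asks for a vertex he already owns, any free vertex will do.\<close>
      then obtain w where w: "w \<in> V - M' - B" and "v \<in> insert w M'"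
        using mw_maker.hyps(1) by (cases "v \<in> M'") auto
      with mw_maker have "maker_wins V R (insert w M') B False"
        by (intro mw_maker.IH) auto
      with w show ?thesis by (rule maker_wins.mw_maker)
    qed
  next
    case (mw_breaker M B)
    have strategy: "maker_wins V R M (insert w B) True"
      and IH: "\<And>M'. M \<subseteq> M' \<Longrightarrow> M' \<subseteq> V - insert w B \<Longrightarrow> maker_wins V R M' (insert w B) True"
      if "w \<in> V - M - B" for w
      using mw_breaker.IH that by simp_all
    show ?case
    proof (cases "V - M' - B = {}")
      case True
      show ?thesis
      proof (rule board_full)
        show "maker_wins V R M B False"
          using mw_breaker.hyps strategy by (intro maker_wins.mw_breaker) auto
      qed (use True mw_breaker.prems in auto)
    next
      case False
      moreover have "\<forall>w\<in>V - M' - B. maker_wins V R M' (insert w B) True"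
        using IH mw_breaker.prems by blast
      ultimately show ?thesis by (rule maker_wins.mw_breaker)
    qed
  qed
qed

lemma maker_wins_moving_first:
  assumes "maker_wins V R M B False" and "M \<subseteq> V - B" and up: "upward_closed_in V R"
  shows "maker_wins V R M B True"
proof (cases "V - M - B = {}")
  case True
  have "R (M \<union> (V - B))"
    using assms(2) by (intro maker_wins_imp_winning_unblocked[OF assms(1) _ up]) auto
  moreover have "M \<union> (V - B) = M" using True by blast
  ultimately have "R M" by simp
  then show ?thesis by (rule maker_wins.mw_done)
next
  case False
  then obtain w where w: "w \<in> V - M - B" by auto
  with assms(2) have "maker_wins V R (insert w M) B False"
    by (intro maker_wins_mono_maker_set[OF assms(1) _ _ up]) auto
  with w show ?thesis by (rule maker_wins.mw_maker)
qed

lemma upward_closed_in_dist_k_resolving: "upward_closed_in V (dist_k_resolving V E k)"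
  unfolding upward_closed_in_def dist_k_resolving_def by blast

lemma dist_k_resolving_mono:
  assumes "dist_k_resolving V E k1 S" and "k1 \<le> k2"
  shows "dist_k_resolving V E k2 S"
proof -
  have "min a (k2 + 1) \<noteq> min b (k2 + 1)" if "min a (k1 + 1) \<noteq> min b (k1 + 1)" for a b :: nat
    using that assms(2) by (simp add: min_def split: if_splits)
  with assms(1) show ?thesis
    unfolding dist_k_resolving_def gdist_k_def by blast
qed

lemma maker_wins_M_game_mono:
  "k1 \<le> k2 \<Longrightarrow> maker_wins_M_game V E k1 \<Longrightarrow> maker_wins_M_game V E k2"
  unfolding maker_wins_M_game_def by (blast intro: maker_wins_mono_goal dist_k_resolving_mono)

lemma maker_wins_B_game_mono:
  "k1 \<le> k2 \<Longrightarrow> maker_wins_B_game V E k1 \<Longrightarrow> maker_wins_B_game V E k2"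
  unfolding maker_wins_B_game_def by (blast intro: maker_wins_mono_goal dist_k_resolving_mono)

lemma outcome_Rk_eq:
  assumes "finite V"
  shows "outcome_Rk V E k =
    (if maker_wins_B_game V E k then 1 else if maker_wins_M_game V E k then 0 else -1)"
proof -
  let ?win = "maker_wins V (dist_k_resolving V E k) {} {}"
  let ?lose = "breaker_wins V (dist_k_resolving V E k) {} {}"
  have "?win t \<longleftrightarrow> \<not> ?lose t" for t
    using maker_wins_or_breaker_wins[OF assms] maker_wins_not_breaker_wins by blast
  moreover have "?win False \<Longrightarrow> ?win True"
    by (rule maker_wins_moving_first[OF _ _ upward_closed_in_dist_k_resolving]) auto
  ultimately show ?thesis
    unfolding outcome_Rk_def maker_wins_M_game_def maker_wins_B_game_def
      breaker_wins_M_game_def breaker_wins_B_game_def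
    by auto
qed

theorem proposition2p4:
  fixes V :: "'a set" and E :: "'a \<Rightarrow> 'a \<Rightarrow> bool" and k1 k2 :: nat
  assumes "simple_graph V E" and "connected_graph V E"
    and "1 \<le> k1" and "k1 \<le> k2"
  shows "outcome_Rk V E k1 \<le> outcome_Rk V E k2"
proof -
  have fin: "finite V" using assms(1) unfolding simple_graph_def by blast
  show ?thesis
    unfolding outcome_Rk_eq[OF fin]
    using maker_wins_M_game_mono[OF assms(4)] maker_wins_B_game_mono[OF assms(4)]
    by auto
qed

end
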